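(* Consider a classical elementary system with timelike four-momentum and non-zero spin, in explicit form (ii). Let $\mathbf A\colon\Gamma\to\mathbb R^3$ be $C^1$, invariant under spatial translations ($\{P_a,A_b\}=0$), transforming as a vector under spatial rotations ($\{J_{ab},A_c\}=\delta_{ac}A_b-\delta_{bc}A_a$), and satisfying $\mathbf A\cdot\mathbf P=0$. Then on $\Gamma^*\setminus\{\mathbf s\parallel\hat{\mathbf P}\}$ one has $$\mathbf A=B\,\hat{\mathbf P}\times\mathbf s+C\,\hat{\mathbf P}\times(\hat{\mathbf P}\times\mathbf s),$$ where $B=B(|\mathbf P|,\hat{\mathbf P}\cdot\mathbf s)$ and $C=C(|\mathbf P|,\hat{\mathbf P}\cdot\mathbf s)$ for $C^1$ functions $B,C\colon\mathbb R_+\times(-S,S)\to\mathbb R$.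
   Context: Fix a positively oriented orthonormal basis $\{e_0,\dots,e_3\}$ of Minkowski space (signature $(-,+,+,+)$), speed of light $c>0$, $m>0$, $S>0$. Spatial indices raised/lowered with Kronecker delta; ${}^{(3)}\varepsilon_{abc}$ Levi-Civita symbol; $\mathbf A\cdot\mathbf B=A_aB^a$, $(\mathbf A\times\mathbf B)_a={}^{(3)}\varepsilon_{abc}A^bB^c$. Poisson bracket: $\omega(X_f,\cdot)=df$, $\{f,g\}=\omega(X_f,X_g)$. Form (ii): $\Gamma=T^*\mathbb R^3\times\mathsf S^2\ni(\mathbf x,\mathbf p,\hat{\mathbf s})$, $\omega=dx^a\wedge dp_a+S\,d\Omega^2$; $\mathbf s=S\hat{\mathbf s}$, $\{s_a,s_b\}={}^{(3)}\varepsilon_{abc}s^c$, $\mathbf s$ Poisson-commuting with $\mathbf x,\mathbf p$; $P_a=p_a$, $P_0=-\sqrt{m^2c^2+\mathbf p^2}$, $J_{ab}=x_ap_b-x_bp_a+{}^{(3)}\varepsilon_{abc}s^c$, $J_{a0}=P_0x_a-\frac{(\mathbf p\times\mathbf s)_a}{mc-P_0}$. $\Gamma^*=\Gamma\setminus\{|\mathbf P|=0\}$, $\hat{\mathbf P}=\mathbf P/|\mathbf P|$; $\{\mathbf s\parallel\hat{\mathbf P}\}$ is the set where $\mathbf s$ is parallel or antiparallel to $\hat{\mathbf P}$. *)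

theory Defs
  imports "HOL-Analysis.Analysis"
begin

text \<open>Functions on Gamma are modelled as functions on the ambient space
  R^3 x R^3 x R^3; only their values / derivatives at points of Gamma enter.\<close>

type_synonym state = "(real^3) \<times> (real^3) \<times> (real^3)"

definition pos :: "state \<Rightarrow> real^3" where "pos z = fst z"
definition mom :: "state \<Rightarrow> real^3" where "mom z = fst (snd z)"
definition spin :: "state \<Rightarrow> real^3" where "spin z = snd (snd z)"

definition Gamma :: "real \<Rightarrow> state set" where
  "Gamma S = {z. norm (spin z) = S}"

text \<open>C^1 on an open set U (derivative continuous, checked on each direction; finite dimension).\<close>
definition C1_on :: "'a::euclidean_space set \<Rightarrow> ('a \<Rightarrow> 'b::euclidean_space) \<Rightarrow> bool" where
  "C1_on U f \<longleftrightarrow> (\<exists>f'. (\<forall>z\<in>U. (f has_derivative f' z) (at z)) \<and>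
                      (\<forall>v. continuous_on U (\<lambda>z. f' z v)))"

definition C1_on_Gamma :: "real \<Rightarrow> (state \<Rightarrow> real^3) \<Rightarrow> bool" where
  "C1_on_Gamma S A \<longleftrightarrow> (\<exists>U. open U \<and> Gamma S \<subseteq> U \<and> C1_on U A)"

definition eps :: "3 \<Rightarrow> 3 \<Rightarrow> 3 \<Rightarrow> real" where
  "eps a b c = (cross3 (axis b 1) (axis c 1)) $ a"

definition dx :: "(state \<Rightarrow> real) \<Rightarrow> state \<Rightarrow> 3 \<Rightarrow> real" where
  "dx f z a = frechet_derivative f (at z) (axis a 1, 0, 0)"
definition dp :: "(state \<Rightarrow> real) \<Rightarrow> state \<Rightarrow> 3 \<Rightarrow> real" where
  "dp f z a = frechet_derivative f (at z) (0, axis a 1, 0)"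
definition grad_s :: "(state \<Rightarrow> real) \<Rightarrow> state \<Rightarrow> real^3" where
  "grad_s f z = (\<chi> a. frechet_derivative f (at z) (0, 0, axis a 1))"

text \<open>Poisson bracket of omega = dx^a/\dp_a + S dOmega^2 with omega(X_f,.) = df,
  {f,g} = omega(X_f,X_g): gives {x_a,p_b} = delta_ab, {s_a,s_b} = eps_abc s^c.  The spin part
  s.(grad f x grad g) only depends on tangential derivatives, hence on f, g restricted to Gamma.\<close>
definition pbr :: "(state \<Rightarrow> real) \<Rightarrow> (state \<Rightarrow> real) \<Rightarrow> state \<Rightarrow> real" where
  "pbr f g z = (\<Sum>a\<in>UNIV. dx f z a * dp g z a - dp f z a * dx g z a)
              + spin z \<bullet> cross3 (grad_s f z) (grad_s g z)"

definition Pcomp :: "3 \<Rightarrow> state \<Rightarrow> real" where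
  "Pcomp a z = mom z $ a"

definition Jcomp :: "3 \<Rightarrow> 3 \<Rightarrow> state \<Rightarrow> real" where
  "Jcomp a b z = pos z $ a * mom z $ b - pos z $ b * mom z $ a
                 + (\<Sum>c\<in>UNIV. eps a b c * spin z $ c)"

definition kdelta :: "3 \<Rightarrow> 3 \<Rightarrow> real" where
  "kdelta a b = (if a = b then 1 else 0)"

definition spin_parallel :: "state \<Rightarrow> bool" where
  "spin_parallel z \<longleftrightarrow> (\<exists>t::real. spin z = t *\<^sub>R (mom z /\<^sub>R norm (mom z)))"

end

theory Submission
  imports Defs
begin

text \<open>The bracket conditions say that the momenta leave \<open>A\<close> invariant and that \<open>J\<^sub>a\<^sub>b\<close> acts on
  \<open>A\<close> as the infinitesimal rotation in the \<open>(a, b)\<close>-plane.  Integrating these flows, \<open>A\<close> does not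
  depend on \<open>x\<close> and is equivariant under simultaneous rotations of \<open>x\<close>, \<open>p\<close> and \<open>s\<close>.
  Three plane rotations bring any admissible state to \<open>p = r e\<^sub>3\<close>, \<open>s = \<sigma> e\<^sub>1 + u e\<^sub>3\<close> with
  \<open>r, \<sigma> > 0\<close> and \<open>\<sigma> = sqrt (S\<^sup>2 - u\<^sup>2)\<close>; there \<open>A \<bullet> p = 0\<close> leaves only the \<open>e\<^sub>1\<close>- and
  \<open>e\<^sub>2\<close>-components, i.e. the two directions \<open>Ph \<times> (Ph \<times> s)\<close> and \<open>Ph \<times> s\<close>.  Reading \<open>B\<close> and
  \<open>C\<close> off these canonical states makes them \<open>C\<^sup>1\<close> in \<open>(r, u)\<close>, and equivariance transports the
  identity back to every state.\<close>

lemma C1_on_bounded_linear: "bounded_linear f \<Longrightarrow> C1_on U f"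
  unfolding C1_on_def by (auto intro!: exI[of _ "\<lambda>_. f"] bounded_linear_imp_has_derivative)

lemma bounded_linear_basis_expansion:
  fixes L :: "'a::euclidean_space \<Rightarrow> 'b::real_normed_vector"
  assumes "bounded_linear L"
  shows "L y = (\<Sum>i\<in>Basis. (y \<bullet> i) *\<^sub>R L i)"
proof -
  have "L y = L (\<Sum>i\<in>Basis. (y \<bullet> i) *\<^sub>R i)" by (simp add: euclidean_representation)
  also have "\<dots> = (\<Sum>i\<in>Basis. (y \<bullet> i) *\<^sub>R L i)"
    using assms by (simp add: linear_sum linear_scale bounded_linear.linear)
  finally show ?thesis .
qed

lemma C1_on_compose:
  fixes f :: "'b::euclidean_space \<Rightarrow> 'c::euclidean_space" and h :: "'a::euclidean_space \<Rightarrow> 'b"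
  assumes f: "C1_on U f" and h: "C1_on V h" and hV: "h ` V \<subseteq> U"
  shows "C1_on V (\<lambda>z. f (h z))"
proof -
  obtain f' where f1: "\<forall>y\<in>U. (f has_derivative f' y) (at y)"
    and f2: "\<forall>v. continuous_on U (\<lambda>y. f' y v)"
    using f unfolding C1_on_def by blast
  obtain h' where h1: "\<forall>z\<in>V. (h has_derivative h' z) (at z)"
    and h2: "\<forall>v. continuous_on V (\<lambda>z. h' z v)"
    using h unfolding C1_on_def by blast
  have "continuous_on V h"
    using h1 by (meson continuous_at_imp_continuous_on has_derivative_continuous)
  then have f'h: "continuous_on V (\<lambda>z. f' (h z) i)" for i
    using continuous_on_compose2[OF f2[rule_format] _ hV] by blast
  have "((\<lambda>z. f (h z)) has_derivative (\<lambda>v. f' (h z) (h' z v))) (at z)" if "z \<in> V" for z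
    using diff_chain_at[OF h1[rule_format, OF that], of f "f' (h z)"] f1 hV that
    by (auto simp: o_def)
  moreover have "continuous_on V (\<lambda>z. f' (h z) (h' z v))" for v
  proof -
    have "continuous_on V (\<lambda>z. \<Sum>i\<in>Basis. (h' z v \<bullet> i) *\<^sub>R f' (h z) i)"
      using h2 f'h by (intro continuous_intros) auto
    moreover have "bounded_linear (f' (h z))" if "z \<in> V" for z
      using f1 hV that by (blast intro: has_derivative_bounded_linear)
    ultimately show ?thesis
      by (auto elim!: continuous_on_eq intro: bounded_linear_basis_expansion[symmetric])
  qed
  ultimately show ?thesis
    unfolding C1_on_def by (intro exI[of _ "\<lambda>z v. f' (h z) (h' z v)"]) blast
qed

lemma C1_on_Pair:
  assumes "C1_on V f" and "C1_on V g"
  shows "C1_on V (\<lambda>z. (f z, g z))"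
proof -
  obtain f' where "\<forall>z\<in>V. (f has_derivative f' z) (at z)" "\<forall>v. continuous_on V (\<lambda>z. f' z v)"
    using assms(1) unfolding C1_on_def by blast
  moreover obtain g' where "\<forall>z\<in>V. (g has_derivative g' z) (at z)" "\<forall>v. continuous_on V (\<lambda>z. g' z v)"
    using assms(2) unfolding C1_on_def by blast
  ultimately show ?thesis
    unfolding C1_on_def
    by (intro exI[of _ "\<lambda>z v. (f' z v, g' z v)"]) (auto intro!: has_derivative_Pair continuous_on_Pair)
qed

lemma C1_on_divide:
  fixes f g :: "'a::euclidean_space \<Rightarrow> real"
  assumes f: "C1_on V f" and g: "C1_on V g" and "\<forall>z\<in>V. g z \<noteq> 0"
  shows "C1_on V (\<lambda>z. f z / g z)"
proof -
  have quotient: "C1_on {q. snd q \<noteq> 0} (\<lambda>q::real \<times> real. fst q / snd q)"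
    unfolding C1_on_def
    by (rule exI[of _ "\<lambda>q v. fst v / snd q - fst q * snd v / (snd q)\<^sup>2"])
       (auto intro!: derivative_eq_intros continuous_intros simp: power2_eq_square field_simps)
  have "C1_on V (\<lambda>z. fst (f z, g z) / snd (f z, g z))"
    by (rule C1_on_compose[OF quotient C1_on_Pair[OF f g]]) (use assms(3) in auto)
  then show ?thesis by simp
qed

lemma C1_on_real_deriv:
  fixes f :: "real \<Rightarrow> real"
  assumes "\<forall>x\<in>U. (f has_real_derivative f' x) (at x)" and "continuous_on U f'"
  shows "C1_on U f"
  unfolding C1_on_def
  using assms by (auto simp: has_field_derivative_def intro!: exI[of _ "\<lambda>x v. f' x * v"] continuous_intros)

section \<open>Rotations in a coordinate plane\<close>

definition rot_generator :: "3 \<Rightarrow> 3 \<Rightarrow> real^3 \<Rightarrow> real^3" where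
  "rot_generator a b v = v$b *\<^sub>R axis a 1 - v$a *\<^sub>R axis b 1"

definition plane_rot :: "3 \<Rightarrow> 3 \<Rightarrow> real \<Rightarrow> real^3 \<Rightarrow> real^3" where
  "plane_rot a b t v = v + (cos t - 1) *\<^sub>R (v$a *\<^sub>R axis a 1 + v$b *\<^sub>R axis b 1)
                        + sin t *\<^sub>R rot_generator a b v"

lemma rot_generator_nth:
  "a \<noteq> b \<Longrightarrow> rot_generator a b v $ i = (if i = a then v$b else if i = b then - v$a else 0)"
  by (auto simp: rot_generator_def axis_def)

lemma plane_rot_nth: "a \<noteq> b \<Longrightarrow> plane_rot a b t v $ i =
   (if i = a then cos t * v$a + sin t * v$b else if i = b then cos t * v$b - sin t * v$a else v$i)"
  by (auto simp: plane_rot_def rot_generator_def axis_def algebra_simps)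

lemma distinct_pairs_3:
  "(a::3) \<noteq> b \<Longrightarrow> (a, b) \<in> {(1, 2), (2, 1), (2, 3), (3, 2), (3, 1), (1, 3)}"
  using exhaust_3[of a] exhaust_3[of b] by fastforce

lemma rotation_2d_identities:
  fixes c s x y x' y' :: real
  assumes "c\<^sup>2 + s\<^sup>2 = 1"
  shows "(c*x + s*y) * (c*x' + s*y') + (c*y - s*x) * (c*y' - s*x') = x*x' + y*y'"
    and "(c*y - s*x) * (c*y' - s*x') + (c*x + s*y) * (c*x' + s*y') = y*y' + x*x'"
    and "(c*x + s*y) * (c*y' - s*x') - (c*y - s*x) * (c*x' + s*y') = x*y' - y*x'"
    and "c * (c*x - s*y) + s * (c*y + s*x) = x"
    and "c * (c*y + s*x) - s * (c*x - s*y) = y"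
  using assms by algebra+

lemma plane_rot_0 [simp]: "plane_rot a b 0 v = v"
  by (simp add: plane_rot_def)

lemma plane_rot_add: "a \<noteq> b \<Longrightarrow> plane_rot a b t (u + v) = plane_rot a b t u + plane_rot a b t v"
  by (simp add: vec_eq_iff plane_rot_nth algebra_simps)

lemma plane_rot_scaleR: "a \<noteq> b \<Longrightarrow> plane_rot a b t (c *\<^sub>R v) = c *\<^sub>R plane_rot a b t v"
  by (simp add: vec_eq_iff plane_rot_nth algebra_simps)

lemma plane_rot_inverse: "a \<noteq> b \<Longrightarrow> plane_rot a b t (plane_rot a b (-t) v) = v"
  by (simp add: vec_eq_iff plane_rot_nth rotation_2d_identities(4,5))

lemma plane_rot_inverse': "a \<noteq> b \<Longrightarrow> plane_rot a b (-t) (plane_rot a b t v) = v"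
  using plane_rot_inverse[of a b "-t" v] by simp

lemma plane_rot_swap: "a \<noteq> b \<Longrightarrow> plane_rot b a t = plane_rot a b (-t)"
  by (auto simp: vec_eq_iff plane_rot_nth)

lemma plane_rot_inner: "a \<noteq> b \<Longrightarrow> plane_rot a b t u \<bullet> plane_rot a b t v = u \<bullet> v"
  by (drule distinct_pairs_3)
     (auto simp: inner_vec_def sum_3 plane_rot_nth rotation_2d_identities(1,2))

lemma plane_rot_norm: "a \<noteq> b \<Longrightarrow> norm (plane_rot a b t v) = norm v"
  by (simp add: norm_eq_sqrt_inner plane_rot_inner)

lemma plane_rot_cross:
  assumes "a \<noteq> b"
  shows "cross3 (plane_rot a b t u) (plane_rot a b t v) = plane_rot a b t (cross3 u v)"
proof -
  have oriented: "cross3 (plane_rot a b t u) (plane_rot a b t v) = plane_rot a b t (cross3 u v)"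
    if "(a, b) \<in> {(1, 2), (2, 3), (3, 1)}" for a b t
    using that
    by (auto simp: vec_eq_iff forall_3 plane_rot_nth cross3_def rotation_2d_identities(3))
       (simp_all add: algebra_simps)
  have "(a, b) \<in> {(1, 2), (2, 3), (3, 1)} \<or> (b, a) \<in> {(1, 2), (2, 3), (3, 1)}"
    using distinct_pairs_3[OF assms] by auto
  then show ?thesis
  proof
    assume "(b, a) \<in> {(1, 2), (2, 3), (3, 1)}"
    from oriented[OF this, of "-t"] show ?thesis
      by (simp add: plane_rot_swap[of b a, OF not_sym[OF assms]])
  qed (rule oriented)
qed

lemma rot_generator_skew: "rot_generator a b u \<bullet> v + u \<bullet> rot_generator a b v = 0"
  by (simp add: rot_generator_def inner_diff_left inner_diff_right inner_axis inner_axis' algebra_simps)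

lemma has_derivative_plane_rot:
  assumes "a \<noteq> b"
  shows "((\<lambda>t. plane_rot a b t v) has_derivative (\<lambda>h. h *\<^sub>R rot_generator a b (plane_rot a b t v))) (at t)"
proof -
  have "((\<lambda>t. plane_rot a b t v) has_derivative
      (\<lambda>h. (h * - sin t) *\<^sub>R (v$a *\<^sub>R axis a 1 + v$b *\<^sub>R axis b 1)
           + (h * cos t) *\<^sub>R rot_generator a b v)) (at t)"
    unfolding plane_rot_def by (auto intro!: derivative_eq_intros)
  also have "(\<lambda>h. (h * - sin t) *\<^sub>R (v$a *\<^sub>R axis a 1 + v$b *\<^sub>R axis b 1)
                 + (h * cos t) *\<^sub>R rot_generator a b v)
      = (\<lambda>h. h *\<^sub>R rot_generator a b (plane_rot a b t v))"
    using assms by (auto simp: vec_eq_iff plane_rot_nth rot_generator_nth axis_def algebra_simps)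
  finally show ?thesis .
qed

lemma plane_rot_align:
  assumes "a \<noteq> b"
  shows "\<exists>t. plane_rot a b t v $ a = 0 \<and> plane_rot a b t v $ b = sqrt ((v$a)\<^sup>2 + (v$b)\<^sup>2)"
proof (cases "v$a = 0 \<and> v$b = 0")
  case True
  then show ?thesis by (intro exI[of _ 0]) simp
next
  case False
  define r where "r = sqrt ((v$a)\<^sup>2 + (v$b)\<^sup>2)"
  have r: "r > 0" "r\<^sup>2 = (v$a)\<^sup>2 + (v$b)\<^sup>2"
    using False by (auto simp: r_def sum_power2_gt_zero_iff)
  have "(v$b / r)\<^sup>2 + (- v$a / r)\<^sup>2 = ((v$a)\<^sup>2 + (v$b)\<^sup>2) / r\<^sup>2"
    by (simp add: power_divide add_divide_distrib)
  also have "\<dots> = 1" using r(1) by (simp flip: r(2))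
  finally obtain t where t: "v$b / r = cos t" "- v$a / r = sin t"
    by (rule sincos_total_2pi)
  have "plane_rot a b t v $ a = 0" "plane_rot a b t v $ b = r"
    using assms r by (simp_all add: plane_rot_nth flip: t) (simp_all add: field_simps power2_eq_square)
  then show ?thesis unfolding r_def by blast
qed

section \<open>Poisson brackets with the generators\<close>

lemmas has_derivative_vec_nth [derivative_intros] = bounded_linear.has_derivative[OF bounded_linear_vec_nth]

lemma frechet_derivative_vec_nth:
  "(A has_derivative A') (at z) \<Longrightarrow> frechet_derivative (\<lambda>w. A w $ c) (at z) = (\<lambda>v. A' v $ c)"
  by (metis frechet_derivative_at has_derivative_vec_nth)

lemma frechet_derivative_Pcomp: "frechet_derivative (Pcomp a) (at z) = (\<lambda>v. fst (snd v) $ a)"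
  by (rule frechet_derivative_at[symmetric])
     (unfold Pcomp_def[abs_def] mom_def, auto intro!: derivative_eq_intros)

lemma frechet_derivative_Jcomp:
  "frechet_derivative (Jcomp a b) (at z) = (\<lambda>v. fst v $ a * mom z $ b + pos z $ a * fst (snd v) $ b
     - (fst v $ b * mom z $ a + pos z $ b * fst (snd v) $ a) + (\<Sum>c\<in>UNIV. eps a b c * snd (snd v) $ c))"
  by (rule frechet_derivative_at[symmetric])
     (unfold Jcomp_def[abs_def] pos_def mom_def spin_def,
      auto simp: algebra_simps intro!: derivative_eq_intros)

lemma bounded_linear_vec_expansion:
  fixes L :: "real^'n \<Rightarrow> real"
  assumes "bounded_linear L"
  shows "L w = (\<Sum>d\<in>UNIV. w $ d * L (axis d 1))"
proof -
  interpret L: bounded_linear L by fact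
  have "L w = L (\<Sum>d\<in>UNIV. w $ d *\<^sub>R axis d 1)"
    using basis_expansion[of w] by (simp add: scalar_mult_eq_scaleR)
  then show ?thesis by (simp add: L.sum L.scale)
qed

lemma cross3_axis_axis_nth: "cross3 (axis a 1) (axis b 1) $ d = eps a b d"
  using exhaust_3[of a] exhaust_3[of b] exhaust_3[of d]
  by (elim disjE) (simp_all add: eps_def cross3_def axis_def)

lemma grad_s_Jcomp: "grad_s (Jcomp a b) z = cross3 (axis a 1) (axis b 1)"
proof -
  have "(\<Sum>c\<in>UNIV. eps a b c * axis d 1 $ c) = eps a b d" for d
    by (simp add: axis_def if_distrib cong: if_cong)
  then show ?thesis
    by (simp add: grad_s_def frechet_derivative_Jcomp vec_eq_iff cross3_axis_axis_nth)
qed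

lemma cross3_triple_product:
  "s \<bullet> cross3 (cross3 x y) g = (s \<bullet> y) * (g \<bullet> x) - (s \<bullet> x) * (g \<bullet> y)"
  by (simp add: cross3_simps)

lemma pbr_Pcomp:
  assumes "(A has_derivative A') (at z)"
  shows "pbr (Pcomp a) (\<lambda>w. A w $ b) z = - A' (axis a 1, 0, 0) $ b"
proof -
  have "grad_s (Pcomp a) z = 0"
    by (simp add: grad_s_def frechet_derivative_Pcomp vec_eq_iff)
  then show ?thesis
    by (simp add: pbr_def dx_def dp_def frechet_derivative_Pcomp frechet_derivative_vec_nth[OF assms]
                  axis_def sum_negf if_distrib if_distribR cong: if_cong)
qed

lemma pbr_Jcomp:
  assumes dA: "(A has_derivative A') (at z)"
  shows "pbr (Jcomp a b) (\<lambda>w. A w $ c) z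
         = A' (rot_generator a b (pos z), rot_generator a b (mom z), rot_generator a b (spin z)) $ c"
proof -
  interpret A': bounded_linear A' using dA by (rule has_derivative_bounded_linear)
  define L1 where "L1 v = A' (v, 0, 0) $ c" for v
  define L2 where "L2 v = A' (0, v, 0) $ c" for v
  define L3 where "L3 v = A' (0, 0, v) $ c" for v
  have L: "bounded_linear L1" "bounded_linear L2" "bounded_linear L3"
    unfolding L1_def L2_def L3_def
    by (auto intro!: bounded_linear_compose[OF bounded_linear_vec_nth]
                     bounded_linear_compose[OF A'.bounded_linear] bounded_linear_Pair
                     bounded_linear_ident bounded_linear_zero)
  have split: "A' (u, v, w) $ c = L1 u + L2 v + L3 w" for u v w
  proof -
    have "(u, v, w) = (u, 0, 0) + (0, v, 0) + (0::real^3, 0::real^3, w)" by simp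
    then show ?thesis unfolding L1_def L2_def L3_def by (metis A'.add vector_add_component)
  qed
  have dxJ: "dx (Jcomp a b) z d = rot_generator a b (mom z) $ d" for d
    by (simp add: dx_def frechet_derivative_Jcomp rot_generator_def axis_def)
  have dpJ: "dp (Jcomp a b) z d = - rot_generator a b (pos z) $ d" for d
    by (simp add: dp_def frechet_derivative_Jcomp rot_generator_def axis_def)
  have dxA: "dx (\<lambda>w. A w $ c) z d = L1 (axis d 1)"
    and dpA: "dp (\<lambda>w. A w $ c) z d = L2 (axis d 1)"
    and gA: "grad_s (\<lambda>w. A w $ c) z = (\<chi> d. L3 (axis d 1))" for d
    by (simp_all add: dx_def dp_def grad_s_def frechet_derivative_vec_nth[OF dA] L1_def L2_def L3_def)
  have "(\<Sum>d\<in>UNIV. rot_generator a b (mom z) $ d * L2 (axis d 1)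
          - - rot_generator a b (pos z) $ d * L1 (axis d 1))
        = L2 (rot_generator a b (mom z)) + L1 (rot_generator a b (pos z))"
    by (simp add: bounded_linear_vec_expansion[OF L(1), of "rot_generator a b (pos z)"]
                  bounded_linear_vec_expansion[OF L(2), of "rot_generator a b (mom z)"] sum.distrib)
  moreover have "spin z \<bullet> cross3 (cross3 (axis a 1) (axis b 1)) (\<chi> d. L3 (axis d 1))
        = L3 (rot_generator a b (spin z))"
    using bounded_linear.linear[OF L(3)]
    by (simp add: cross3_triple_product inner_axis rot_generator_def linear_diff linear_scale)
  ultimately show ?thesis
    unfolding pbr_def dxJ dpJ dxA dpA gA grad_s_Jcomp split by simp
qed

lemma translation_generator_vanishes:
  assumes dA: "(A has_derivative A') (at z)"
    and transl: "\<forall>a b. pbr (Pcomp a) (\<lambda>w. A w $ b) z = 0"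
  shows "A' (v, 0, 0) = 0"
proof -
  have "bounded_linear (\<lambda>v. A' (v, 0::real^3, 0::real^3))"
    by (intro bounded_linear_compose[OF has_derivative_bounded_linear[OF dA]]
              bounded_linear_Pair bounded_linear_ident bounded_linear_zero)
  then have lin: "linear (\<lambda>v. A' (v, 0::real^3, 0::real^3))"
    by (rule bounded_linear.linear)
  have "A' (axis a 1, 0, 0) = 0" for a
    using transl pbr_Pcomp[OF dA] by (simp add: vec_eq_iff)
  then have "(\<lambda>v. A' (v, 0::real^3, 0::real^3)) = (\<lambda>v. 0)"
    by (intro linear_eq_stdbasis[OF lin linear_zero]) (auto simp: Basis_vec_def)
  then show ?thesis by (metis (no_types, lifting))
qed

lemma rotation_generator_action:
  assumes dA: "(A has_derivative A') (at z)"
    and rot: "\<forall>c. pbr (Jcomp a b) (\<lambda>w. A w $ c) z = kdelta a c * A z $ b - kdelta b c * A z $ a"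
  shows "A' (rot_generator a b (pos z), rot_generator a b (mom z), rot_generator a b (spin z))
         = rot_generator a b (A z)"
  using rot pbr_Jcomp[OF dA]
  by (auto simp: vec_eq_iff kdelta_def rot_generator_def axis_def)

section \<open>Integrating the symmetries\<close>

definition rot_state :: "3 \<Rightarrow> 3 \<Rightarrow> real \<Rightarrow> state \<Rightarrow> state" where
  "rot_state a b t z = (plane_rot a b t (pos z), plane_rot a b t (mom z), plane_rot a b t (spin z))"

lemma rot_state_simps [simp]:
  "pos (rot_state a b t z) = plane_rot a b t (pos z)"
  "mom (rot_state a b t z) = plane_rot a b t (mom z)"
  "spin (rot_state a b t z) = plane_rot a b t (spin z)"
  by (simp_all add: rot_state_def pos_def mom_def spin_def)

lemma rot_state_Gamma: "a \<noteq> b \<Longrightarrow> z \<in> Gamma S \<Longrightarrow> rot_state a b t z \<in> Gamma S"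
  by (simp add: Gamma_def plane_rot_norm)

lemma rot_state_0 [simp]: "rot_state a b 0 z = z"
  by (simp add: rot_state_def pos_def mom_def spin_def)

lemma has_derivative_rot_state:
  assumes "a \<noteq> b"
  shows "((\<lambda>t. rot_state a b t z) has_derivative (\<lambda>h. h *\<^sub>R
           (rot_generator a b (pos (rot_state a b t z)), rot_generator a b (mom (rot_state a b t z)),
            rot_generator a b (spin (rot_state a b t z))))) (at t)"
  unfolding rot_state_simps unfolding rot_state_def
  by (auto intro!: derivative_eq_intros has_derivative_plane_rot[OF assms])

lemma translation_invariant:
  assumes dA: "\<forall>z\<in>U. (A has_derivative A' z) (at z)" and GU: "Gamma S \<subseteq> U"
    and gen: "\<forall>z\<in>Gamma S. \<forall>v. A' z (v, 0, 0) = 0" and z: "z \<in> Gamma S"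
  shows "A z = A (0, mom z, spin z)"
proof -
  define w where "w t = (t *\<^sub>R pos z, mom z, spin z)" for t
  have w: "w t \<in> Gamma S" for t
    using z by (simp add: w_def Gamma_def spin_def)
  have "((\<lambda>t. A (w t)) has_derivative (\<lambda>h. A' (w t) (h *\<^sub>R pos z, 0, 0))) (at t)" for t
  proof -
    have "(w has_derivative (\<lambda>h. (h *\<^sub>R pos z, 0, 0))) (at t)"
      unfolding w_def by (auto intro!: derivative_eq_intros simp: zero_prod_def)
    moreover have "(A has_derivative A' (w t)) (at (w t))"
      using dA GU w by blast
    ultimately show ?thesis
      using diff_chain_at by (auto simp: o_def)
  qed
  then have "((\<lambda>t. A (w t)) has_derivative (\<lambda>h. 0)) (at t within UNIV)" for t
    using gen w by simp
  then obtain c where "\<forall>t\<in>UNIV. A (w t) = c"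
    using has_derivative_zero_constant[OF convex_UNIV] by blast
  then have "A (w 1) = A (w 0)" by simp
  then show ?thesis by (simp add: w_def pos_def mom_def spin_def)
qed

lemma rotation_equivariant:
  assumes dA: "\<forall>z\<in>U. (A has_derivative A' z) (at z)" and GU: "Gamma S \<subseteq> U"
    and gen: "\<forall>z\<in>Gamma S. A' z (rot_generator a b (pos z), rot_generator a b (mom z),
                                  rot_generator a b (spin z)) = rot_generator a b (A z)"
    and ab: "a \<noteq> b" and z: "z \<in> Gamma S"
  shows "A (rot_state a b t z) = plane_rot a b t (A z)"
proof -
  have "plane_rot a b t u \<bullet> A (rot_state a b t z) = u \<bullet> A z" for u
  proof -
    have "((\<lambda>t. plane_rot a b t u \<bullet> A (rot_state a b t z)) has_derivative (\<lambda>h. 0)) (at \<tau> within UNIV)"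
      for \<tau>
    proof -
      define w where "w = rot_state a b \<tau> z"
      have w: "w \<in> Gamma S" using rot_state_Gamma[OF ab z] by (simp add: w_def)
      have dAw: "(A has_derivative A' w) (at w)" using dA GU w by blast
      have "((\<lambda>t. A (rot_state a b t z)) has_derivative (\<lambda>h. A' w (h *\<^sub>R
              (rot_generator a b (pos w), rot_generator a b (mom w), rot_generator a b (spin w))))) (at \<tau>)"
        using diff_chain_at[OF has_derivative_rot_state[OF ab] dAw[unfolded w_def]]
        by (simp add: o_def w_def)
      also have "(\<lambda>h. A' w (h *\<^sub>R (rot_generator a b (pos w), rot_generator a b (mom w),
                   rot_generator a b (spin w)))) = (\<lambda>h. h *\<^sub>R rot_generator a b (A w))"
        using gen w linear_scale[OF has_derivative_linear[OF dAw]] by auto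
      finally have "((\<lambda>t. plane_rot a b t u \<bullet> A (rot_state a b t z)) has_derivative
          (\<lambda>h. h * (plane_rot a b \<tau> u \<bullet> rot_generator a b (A w)
                    + rot_generator a b (plane_rot a b \<tau> u) \<bullet> A w))) (at \<tau>)"
        using has_derivative_inner[OF has_derivative_plane_rot[OF ab]]
        by (fastforce simp: w_def algebra_simps)
      then show ?thesis
        using rot_generator_skew[of a b "plane_rot a b \<tau> u" "A w"] by (simp add: add.commute)
    qed
    then obtain c where "\<forall>t\<in>UNIV. plane_rot a b t u \<bullet> A (rot_state a b t z) = c"
      using has_derivative_zero_constant[OF convex_UNIV] by blast
    then show ?thesis by (metis UNIV_I plane_rot_0 rot_state_0)
  qed
  then have "x \<bullet> A (rot_state a b t z) = x \<bullet> plane_rot a b t (A z)" for x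
    by (metis plane_rot_inverse[OF ab] plane_rot_inner[OF ab])
  then show ?thesis using vector_eq_ldot by blast
qed

section \<open>Reduction to a canonical state\<close>

lemma plane_rot_eq_iff: "a \<noteq> b \<Longrightarrow> plane_rot a b t u = plane_rot a b t v \<longleftrightarrow> u = v"
  by (metis plane_rot_inverse')

definition spin_normal_form ::
    "(state \<Rightarrow> real^3) \<Rightarrow> (real \<times> real \<Rightarrow> real) \<Rightarrow> (real \<times> real \<Rightarrow> real) \<Rightarrow> state \<Rightarrow> bool" where
  "spin_normal_form A B C z \<longleftrightarrow>
     (let Ph = mom z /\<^sub>R norm (mom z); s = spin z; arg = (norm (mom z), Ph \<bullet> s)
      in A z = B arg *\<^sub>R cross3 Ph s + C arg *\<^sub>R cross3 Ph (cross3 Ph s))"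

lemma spin_normal_form_rot_state:
  assumes ab: "a \<noteq> b" and equiv: "A (rot_state a b t z) = plane_rot a b t (A z)"
    and nf: "spin_normal_form A B C (rot_state a b t z)"
  shows "spin_normal_form A B C z"
proof -
  let ?R = "plane_rot a b t"
  define Ph where "Ph = mom z /\<^sub>R norm (mom z)"
  define arg where "arg = (norm (mom z), Ph \<bullet> spin z)"
  have "mom (rot_state a b t z) /\<^sub>R norm (mom (rot_state a b t z)) = ?R Ph"
    by (simp add: Ph_def plane_rot_norm[OF ab] plane_rot_scaleR[OF ab])
  then have "?R (A z) = B arg *\<^sub>R cross3 (?R Ph) (?R (spin z))
                       + C arg *\<^sub>R cross3 (?R Ph) (cross3 (?R Ph) (?R (spin z)))"
    using nf equiv
    by (simp add: spin_normal_form_def Let_def arg_def plane_rot_norm[OF ab] plane_rot_inner[OF ab])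
  also have "\<dots> = ?R (B arg *\<^sub>R cross3 Ph (spin z) + C arg *\<^sub>R cross3 Ph (cross3 Ph (spin z)))"
    by (simp add: plane_rot_cross[OF ab] plane_rot_add[OF ab] plane_rot_scaleR[OF ab])
  finally show ?thesis
    by (simp add: spin_normal_form_def Ph_def arg_def plane_rot_eq_iff[OF ab])
qed

lemma spin_parallel_rot_state:
  assumes ab: "a \<noteq> b" and "spin_parallel (rot_state a b t z)"
  shows "spin_parallel z"
proof -
  obtain \<tau> where "plane_rot a b t (spin z) = plane_rot a b t (\<tau> *\<^sub>R (mom z /\<^sub>R norm (mom z)))"
    using assms(2) by (auto simp: spin_parallel_def plane_rot_norm[OF ab] plane_rot_scaleR[OF ab])
  then show ?thesis
    unfolding plane_rot_eq_iff[OF ab] spin_parallel_def by blast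
qed

lemma rot_state_align:
  "\<exists>t1 t2 t3. let w = rot_state 2 1 t3 (rot_state 2 3 t2 (rot_state 1 2 t1 z)) in
     mom w $ 1 = 0 \<and> mom w $ 2 = 0 \<and> mom w $ 3 \<ge> 0 \<and> spin w $ 2 = 0 \<and> spin w $ 1 \<ge> 0"
proof -
  obtain t1 where t1: "plane_rot 1 2 t1 (mom z) $ 1 = 0"
    using plane_rot_align[of 1 2] by auto
  define z1 where "z1 = rot_state 1 2 t1 z"
  obtain t2 where t2: "plane_rot 2 3 t2 (mom z1) $ 2 = 0" "plane_rot 2 3 t2 (mom z1) $ 3 \<ge> 0"
    using plane_rot_align[of 2 3] by fastforce
  define z2 where "z2 = rot_state 2 3 t2 z1"
  obtain t3 where t3: "plane_rot 2 1 t3 (spin z2) $ 2 = 0" "plane_rot 2 1 t3 (spin z2) $ 1 \<ge> 0"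
    using plane_rot_align[of 2 1] by fastforce
  have "mom z2 $ 1 = 0" "mom z2 $ 2 = 0" "mom z2 $ 3 \<ge> 0"
    using t1 t2 by (simp_all add: z2_def z1_def plane_rot_nth)
  then have "mom (rot_state 2 1 t3 z2) $ 1 = 0 \<and> mom (rot_state 2 1 t3 z2) $ 2 = 0
             \<and> mom (rot_state 2 1 t3 z2) $ 3 \<ge> 0"
    by (simp add: plane_rot_nth)
  with t3 show ?thesis
    unfolding z2_def z1_def Let_def by (intro exI[of _ t1] exI[of _ t2] exI[of _ t3]) simp
qed

definition perp_spin :: "real \<Rightarrow> real \<Rightarrow> real" where
  "perp_spin S u = sqrt (S\<^sup>2 - u\<^sup>2)"

definition canonical_state :: "real \<Rightarrow> real \<times> real \<Rightarrow> state" where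
  "canonical_state S w = (0, vector [0, 0, fst w], vector [perp_spin S (snd w), 0, snd w])"

text \<open>At the canonical state, \<open>Ph = e\<^sub>3\<close>, \<open>Ph \<times> s = \<sigma> e\<^sub>2\<close> and \<open>Ph \<times> (Ph \<times> s) = -\<sigma> e\<^sub>1\<close>
  with \<open>\<sigma> = perp_spin S u\<close>; the coefficients are read off there.\<close>

definition spin_coeff_B :: "(state \<Rightarrow> real^3) \<Rightarrow> real \<Rightarrow> real \<times> real \<Rightarrow> real" where
  "spin_coeff_B A S w = A (canonical_state S w) $ 2 / perp_spin S (snd w)"

definition spin_coeff_C :: "(state \<Rightarrow> real^3) \<Rightarrow> real \<Rightarrow> real \<times> real \<Rightarrow> real" where
  "spin_coeff_C A S w = - A (canonical_state S w) $ 1 / perp_spin S (snd w)"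

lemma perp_spin_pos_square:
  assumes "\<bar>u\<bar> < S"
  shows "perp_spin S u > 0" and "(perp_spin S u)\<^sup>2 = S\<^sup>2 - u\<^sup>2"
proof -
  have "\<bar>u\<bar>\<^sup>2 < S\<^sup>2" using assms by (intro power_strict_mono) auto
  then show "perp_spin S u > 0" and "(perp_spin S u)\<^sup>2 = S\<^sup>2 - u\<^sup>2"
    by (simp_all add: perp_spin_def)
qed

lemma norm_vector_3: "norm (vector [x, y, z] :: real^3) = sqrt (x\<^sup>2 + y\<^sup>2 + z\<^sup>2)"
  by (simp add: norm_eq_sqrt_inner inner_vec_def sum_3 power2_eq_square)

lemma canonical_state_Gamma:
  assumes "w \<in> {0<..} \<times> {-S<..<S}"
  shows "canonical_state S w \<in> Gamma S"
proof -
  have u: "\<bar>snd w\<bar> < S" using assms by auto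
  then have "S > 0" by linarith
  with perp_spin_pos_square(2)[OF u] show ?thesis
    by (simp add: Gamma_def canonical_state_def spin_def norm_vector_3)
qed

lemma C1_on_perp_spin: "C1_on {-S<..<S} (perp_spin S)"
proof (rule C1_on_real_deriv)
  show "\<forall>u\<in>{-S<..<S}. (perp_spin S has_real_derivative - u / perp_spin S u) (at u)"
  proof
    fix u assume "u \<in> {-S<..<S}"
    then have "\<bar>u\<bar> < S" by auto
    from perp_spin_pos_square[OF this] have "S\<^sup>2 - u\<^sup>2 > 0"
      using zero_less_power[of "perp_spin S u" 2] by simp
    then show "(perp_spin S has_real_derivative - u / perp_spin S u) (at u)"
      unfolding perp_spin_def[abs_def]
      by (auto intro!: derivative_eq_intros simp: field_simps)
  qed
  show "continuous_on {-S<..<S} (\<lambda>u. - u / perp_spin S u)"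
    unfolding perp_spin_def
  proof (intro continuous_intros ballI)
    fix u assume "u \<in> {-S<..<S}"
    then have "\<bar>u\<bar> < S" by auto
    then show "sqrt (S\<^sup>2 - u\<^sup>2) \<noteq> 0"
      using perp_spin_pos_square(1)[of u S] by (simp add: perp_spin_def)
  qed
qed

lemma C1_on_canonical_state: "C1_on ({0<..} \<times> {-S<..<S}) (canonical_state S)"
proof -
  let ?V = "{0<..} \<times> {-S<..<S} :: (real \<times> real) set"
  define L :: "real \<times> real \<times> real \<Rightarrow> state"
    where "L = (\<lambda>(r, u, \<sigma>). (0, vector [0, 0, r], vector [\<sigma>, 0, u]))"
  have "linear L"
    unfolding L_def by (rule linearI) (auto simp: vec_eq_iff forall_3 vector_3)
  then have L: "C1_on UNIV L"
    by (simp add: C1_on_bounded_linear linear_conv_bounded_linear)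
  have "C1_on ?V (\<lambda>w. perp_spin S (snd w))"
    by (rule C1_on_compose[OF C1_on_perp_spin C1_on_bounded_linear[OF bounded_linear_snd]]) auto
  then have "C1_on ?V (\<lambda>w. (fst w, snd w, perp_spin S (snd w)))"
    using C1_on_bounded_linear[OF bounded_linear_fst] C1_on_bounded_linear[OF bounded_linear_snd]
    by (intro C1_on_Pair) auto
  from C1_on_compose[OF L this] show ?thesis
    by (simp add: L_def canonical_state_def[abs_def])
qed

lemma C1_on_canonical_coeff:
  assumes "C1_on U A" and "Gamma S \<subseteq> U" and "bounded_linear (l :: real^3 \<Rightarrow> real)"
  shows "C1_on ({0<..} \<times> {-S<..<S}) (\<lambda>w. l (A (canonical_state S w)) / perp_spin S (snd w))"
proof (rule C1_on_divide)
  show "C1_on ({0<..} \<times> {-S<..<S}) (\<lambda>w. l (A (canonical_state S w)))"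
  proof (rule C1_on_compose[OF C1_on_bounded_linear[OF assms(3)], where U = UNIV])
    show "C1_on ({0<..} \<times> {-S<..<S}) (\<lambda>w. A (canonical_state S w))"
      by (rule C1_on_compose[OF assms(1) C1_on_canonical_state])
         (use assms(2) canonical_state_Gamma in blast)
  qed auto
  show "C1_on ({0<..} \<times> {-S<..<S}) (\<lambda>w. perp_spin S (snd w))"
    by (rule C1_on_compose[OF C1_on_perp_spin C1_on_bounded_linear[OF bounded_linear_snd]]) auto
  show "\<forall>w\<in>{0<..} \<times> {-S<..<S}. perp_spin S (snd w) \<noteq> 0"
    using perp_spin_pos_square(1) by (force simp: abs_less_iff)
qed

lemma spin_normal_form_canonical:
  assumes z: "z \<in> Gamma S"
    and mom: "mom z $ 1 = 0" "mom z $ 2 = 0" "mom z $ 3 \<ge> 0" "mom z \<noteq> 0"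
    and spin: "spin z $ 2 = 0" "spin z $ 1 \<ge> 0" and np: "\<not> spin_parallel z"
    and orth: "A z \<bullet> mom z = 0" and transl: "A z = A (0, mom z, spin z)"
  shows "spin_normal_form A (spin_coeff_B A S) (spin_coeff_C A S) z"
proof -
  define r where "r = mom z $ 3"
  define u where "u = spin z $ 3"
  define \<sigma> where "\<sigma> = spin z $ 1"
  have p: "mom z = vector [0, 0, r]" and s: "spin z = vector [\<sigma>, 0, u]"
    using mom spin by (simp_all add: r_def u_def \<sigma>_def vec_eq_iff forall_3 vector_3)
  have "r > 0" using mom(3,4) unfolding p by (auto simp: vec_eq_iff forall_3 vector_3)
  then have Ph: "mom z /\<^sub>R norm (mom z) = vector [0, 0, 1]" and norm_p: "norm (mom z) = r"
    by (simp_all add: p norm_vector_3 vec_eq_iff forall_3 vector_3)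
  have "\<sigma> \<noteq> 0"
  proof
    assume "\<sigma> = 0"
    then have "spin z = u *\<^sub>R (mom z /\<^sub>R norm (mom z))"
      by (simp add: Ph s vec_eq_iff forall_3 vector_3)
    with np show False unfolding spin_parallel_def by blast
  qed
  with spin(2) have "\<sigma> > 0" by (simp add: \<sigma>_def)
  have "sqrt (\<sigma>\<^sup>2 + u\<^sup>2) = S"
    using z by (simp add: Gamma_def s norm_vector_3)
  then have "S\<^sup>2 - u\<^sup>2 = \<sigma>\<^sup>2"
    by (metis add_diff_cancel_right' add_nonneg_nonneg real_sqrt_pow2 zero_le_power2)
  with \<open>\<sigma> > 0\<close> have "perp_spin S u = \<sigma>"
    by (simp add: perp_spin_def)
  then have "canonical_state S (r, u) = (0, mom z, spin z)"
    by (simp add: canonical_state_def p s)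
  then have coeff: "spin_coeff_B A S (r, u) = A z $ 2 / \<sigma>" "spin_coeff_C A S (r, u) = - A z $ 1 / \<sigma>"
    using transl \<open>perp_spin S u = \<sigma>\<close> by (simp_all add: spin_coeff_B_def spin_coeff_C_def)
  have "A z $ 3 = 0"
    using orth \<open>r > 0\<close> by (simp add: p inner_vec_def sum_3 vector_3)
  moreover have cross: "cross3 (vector [0, 0, 1]) (spin z) = vector [0, \<sigma>, 0]"
    "cross3 (vector [0, 0, 1]) (vector [0, \<sigma>, 0]) = vector [- \<sigma>, 0, 0]"
    by (simp_all add: s cross3_def)
  moreover have "vector [0, 0, 1] \<bullet> spin z = u"
    by (simp add: s inner_vec_def sum_3 vector_3)
  ultimately show ?thesis
    using \<open>\<sigma> \<noteq> 0\<close> unfolding spin_normal_form_def Let_def Ph unfolding norm_p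
    by (simp add: coeff cross vec_eq_iff forall_3 vector_3)
qed

lemma rot_state_regular:
  assumes "a \<noteq> b" and "z \<in> Gamma S" and "mom z \<noteq> 0" and "\<not> spin_parallel z"
  shows "rot_state a b t z \<in> Gamma S" and "mom (rot_state a b t z) \<noteq> 0"
    and "\<not> spin_parallel (rot_state a b t z)"
proof -
  show "rot_state a b t z \<in> Gamma S" by (rule rot_state_Gamma[OF assms(1,2)])
  show "mom (rot_state a b t z) \<noteq> 0"
    using assms(3) plane_rot_norm[OF assms(1)] by (metis norm_eq_zero rot_state_simps(2))
  show "\<not> spin_parallel (rot_state a b t z)"
    using spin_parallel_rot_state[OF assms(1)] assms(4) by blast
qed

lemma spin_normal_form_of_symmetries:
  assumes equiv: "\<And>a b t z. a \<noteq> b \<Longrightarrow> z \<in> Gamma S \<Longrightarrow> A (rot_state a b t z) = plane_rot a b t (A z)"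
    and transl: "\<And>z. z \<in> Gamma S \<Longrightarrow> A z = A (0, mom z, spin z)"
    and orth: "\<And>z. z \<in> Gamma S \<Longrightarrow> A z \<bullet> mom z = 0"
    and z: "z \<in> Gamma S" "mom z \<noteq> 0" "\<not> spin_parallel z"
  shows "spin_normal_form A (spin_coeff_B A S) (spin_coeff_C A S) z"
proof -
  let ?nf = "spin_normal_form A (spin_coeff_B A S) (spin_coeff_C A S)"
  have unrotate: "?nf z'" if "?nf (rot_state a b t z')" "a \<noteq> b" "z' \<in> Gamma S" for a b t z'
    by (rule spin_normal_form_rot_state[OF that(2) equiv[OF that(2,3)] that(1)])
  obtain t1 t2 t3 where canonical:
    "let w = rot_state 2 1 t3 (rot_state 2 3 t2 (rot_state 1 2 t1 z)) in
       mom w $ 1 = 0 \<and> mom w $ 2 = 0 \<and> mom w $ 3 \<ge> 0 \<and> spin w $ 2 = 0 \<and> spin w $ 1 \<ge> 0"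
    using rot_state_align by blast
  define z1 where "z1 = rot_state 1 2 t1 z"
  define z2 where "z2 = rot_state 2 3 t2 z1"
  define z3 where "z3 = rot_state 2 1 t3 z2"
  have z1: "z1 \<in> Gamma S" "mom z1 \<noteq> 0" "\<not> spin_parallel z1"
    using rot_state_regular[OF _ z, of 1 2 t1] unfolding z1_def by simp_all
  have z2: "z2 \<in> Gamma S" "mom z2 \<noteq> 0" "\<not> spin_parallel z2"
    using rot_state_regular[OF _ z1, of 2 3 t2] unfolding z2_def by simp_all
  have z3: "z3 \<in> Gamma S" "mom z3 \<noteq> 0" "\<not> spin_parallel z3"
    using rot_state_regular[OF _ z2, of 2 1 t3] unfolding z3_def by simp_all
  have "?nf z3"
    using canonical z3 orth[OF z3(1)] transl[OF z3(1)]
    by (intro spin_normal_form_canonical) (simp_all add: z1_def z2_def z3_def Let_def)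
  from this[unfolded z3_def] have "?nf z2" by (rule unrotate) (simp_all add: z2)
  from this[unfolded z2_def] have "?nf z1" by (rule unrotate) (simp_all add: z1)
  from this[unfolded z1_def] show ?thesis by (rule unrotate) (simp_all add: z)
qed

theorem mainTheorem11:
  fixes S :: real and A :: "state \<Rightarrow> real^3"
  assumes S_pos: "S > 0"
    and A_C1: "C1_on_Gamma S A"
    and transl: "\<forall>z\<in>Gamma S. \<forall>a b. pbr (Pcomp a) (\<lambda>w. A w $ b) z = 0"
    and rot: "\<forall>z\<in>Gamma S. \<forall>a b c.
               pbr (Jcomp a b) (\<lambda>w. A w $ c) z = kdelta a c * A z $ b - kdelta b c * A z $ a"
    and orth: "\<forall>z\<in>Gamma S. A z \<bullet> mom z = 0"
  shows "\<exists>B C :: real \<times> real \<Rightarrow> real.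
           C1_on ({0<..} \<times> {-S<..<S}) B \<and> C1_on ({0<..} \<times> {-S<..<S}) C \<and>
           (\<forall>z\<in>Gamma S. mom z \<noteq> 0 \<longrightarrow> \<not> spin_parallel z \<longrightarrow>
              (let Ph = mom z /\<^sub>R norm (mom z); s = spin z;
                   arg = (norm (mom z), Ph \<bullet> s)
               in A z = B arg *\<^sub>R cross3 Ph s + C arg *\<^sub>R cross3 Ph (cross3 Ph s)))"
proof -
  obtain U where U: "Gamma S \<subseteq> U" "C1_on U A"
    using A_C1 unfolding C1_on_Gamma_def by blast
  then obtain A' where dA: "\<forall>z\<in>U. (A has_derivative A' z) (at z)"
    unfolding C1_on_def by blast
  have "\<forall>z\<in>Gamma S. \<forall>v. A' z (v, 0, 0) = 0"
    using translation_generator_vanishes dA U(1) transl by blast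
  then have "A z = A (0, mom z, spin z)" if "z \<in> Gamma S" for z
    using translation_invariant dA U(1) that by blast
  moreover have "A (rot_state a b t z) = plane_rot a b t (A z)"
    if "a \<noteq> b" "z \<in> Gamma S" for a b t z
    using rotation_generator_action dA U(1) rot
    by (intro rotation_equivariant[OF dA U(1) _ that]) blast
  ultimately have "\<forall>z\<in>Gamma S. mom z \<noteq> 0 \<longrightarrow> \<not> spin_parallel z \<longrightarrow>
                     spin_normal_form A (spin_coeff_B A S) (spin_coeff_C A S) z"
    using orth by (intro ballI impI spin_normal_form_of_symmetries) auto
  moreover have "C1_on ({0<..} \<times> {-S<..<S}) (spin_coeff_B A S)"
    and "C1_on ({0<..} \<times> {-S<..<S}) (spin_coeff_C A S)"
    using C1_on_canonical_coeff[OF U(2,1) bounded_linear_vec_nth]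
          C1_on_canonical_coeff[OF U(2,1) bounded_linear_minus[OF bounded_linear_vec_nth]]
    by (simp_all add: spin_coeff_B_def[abs_def] spin_coeff_C_def[abs_def])
  ultimately show ?thesis
    unfolding spin_normal_form_def by blast
qed

end
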